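(* Consider the multiobjective optimal control setting, Assumption A and Algorithm 1 described in the context, and let $x_0\in\mathbb{X}_N$. Then every closed-loop trajectory $x(\cdot)=x_\mu(\cdot,x_0)$ driven by the feedback $\mu^N$ from Algorithm 1 converges to the equilibrium $x^e$, and $\widetilde{\ell}_1(x(k),\mu^N(k,x(k)))\to0$ as $k\to\infty$.
   Context: Let $f:\mathbb{R}^n\times\mathbb{R}^m\to\mathbb{R}^n$ be continuous and consider $x(k+1)=f(x(k),u(k))$, $x(0)=x_0$; $x_{\mathbf{u}}(k,x_0)$ denotes the solution for control sequence $\mathbf u$. Let $\mathbb{X}\subseteq\mathbb{R}^n$, $\mathbb{U}\subseteq\mathbb{R}^m$, $\mathbb{X}_0\subseteq\mathbb{X}$ be nonempty; horizons $N\ge2$, objectives $s\ge2$. $\mathbb{U}^N(x_0)$ is the set of $\mathbf{u}\in\mathbb{U}^N$ with $x_{\mathbf{u}}(k,x_0)\in\mathbb{X}$ for $k=1,\dots,N-1$ and $x_{\mathbf{u}}(N,x_0)\in\mathbb{X}_0$; $\mathbb{X}_N=\{x_0\in\mathbb{X}:\mathbb{U}^N(x_0)\neq\emptyset\}$. With stage costs $\ell_i:\mathbb{X}\times\mathbb{U}\to\mathbb{R}$ ($i=1,\dots,s$) and continuous $F_1:\mathbb{X}_0\to\mathbb{R}_{\ge0}$: $J_1^N(x_0,\mathbf{u})=\sum_{k=0}^{N-1}\ell_1(x_{\mathbf{u}}(k,x_0),u(k))+F_1(x_{\mathbf{u}}(N,x_0))$, $J_i^N(x_0,\mathbf{u})=\sum_{k=0}^{N-1}\ell_i(x_{\mathbf{u}}(k,x_0),u(k))$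 for $i\ge2$. $\mathbf{u}^\star\in\mathbb{U}^N(x_0)$ is efficient if no $\mathbf{u}\in\mathbb{U}^N(x_0)$ satisfies $J_i^N(x_0,\mathbf{u})\le J_i^N(x_0,\mathbf{u}^\star)$ for all $i$ with strict inequality for some $i$; $\mathbb{U}^N_{\mathcal P}(x_0)$ denotes the efficient set. $\mathcal{J}^N(x_0)$ is the set of vectors $(J_i^N(x_0,\mathbf u))_{i=1}^s$, $\mathbf u\in\mathbb{U}^N(x_0)$, and $\mathcal{J}^N_{\mathcal P}(x_0)$ the subset for efficient $\mathbf u$; external stability means every $y\in\mathcal{J}^N(x_0)$ dominates componentwise some $y_{\mathcal P}\in\mathcal{J}^N_{\mathcal P}(x_0)$. $\mathcal K_\infty$: continuous strictly increasing unbounded functions $\mathbb{R}_{\ge0}\to\mathbb{R}_{\ge0}$ vanishing at $0$. Assumption A: (i) $(x^e,u^e)\in\mathbb{X}\times\mathbb{U}$ with $f(x^e,u^e)=x^e$; (ii) $\lambda_1:\mathbb{X}\to\mathbb{R}$ bounded below, $\lambda_1(x^e)=0$, $\alpha_{\ell,1}\in\mathcal K_\infty$ with $\ell_1(x,u)-\ell_1(x^e,u^e)+\lambda_1(x)-\lambda_1(f(x,u))\ge\alpha_{\ell,1}(\|x-x^e\|+\|u-u^e\|)$ on $\mathbb{X}\times\mathbb{U}$; (iii) all $\ell_i$ continuous; (iv) $x^e\in\mathbb{X}_0$ and $\kappa:\mathbb{X}_0\to\mathbb{U}$ with $f(x,\kappa(x))\in\mathbb{X}_0$ and $F_1(f(x,\kappa(x)))+\ell_1(x,\kappa(x))\le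 F_1(x)+\ell_1(x^e,u^e)$ for all $x\in\mathbb{X}_0$; (v) $\mathcal{J}^N_{\mathcal P}(x)$ externally stable for $\mathcal{J}^N(x)$ for all $x\in\mathbb{X}_N$. Algorithm 1 ($k\in\mathbb N_0$): $x(0)=x_0$, choose any $\mathbf{u}^\star_{x(0)}\in\mathbb{U}^N_{\mathcal P}(x(0))$; for $k\ge1$ choose $\mathbf{u}^\star_{x(k)}\in\mathbb{U}^N_{\mathcal P}(x(k))$ with $J_1^N(x(k),\mathbf{u}^\star_{x(k)})\le J_1^N(x(k),\mathbf{u}_{x(k)})$, where $\mathbf{u}_{x(k+1)}:=(u^\star_{x(k)}(1),\dots,u^\star_{x(k)}(N-1),\kappa(x_{\mathbf{u}^\star_{x(k)}}(N,x(k))))$. Feedback $\mu^N(k,x(k)):=u^\star_{x(k)}(0)$, $x(k+1)=f(x(k),\mu^N(k,x(k)))$, $x_\mu(k,x_0):=x(k)$. Rotated stage cost: $\widetilde\ell_1(x,u)=\ell_1(x,u)-\ell_1(x^e,u^e)+\lambda_1(x)-\lambda_1(f(x,u))$. *)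

theory Defs
  imports "HOL-Analysis.Analysis"
begin

text \<open>Control sequences of horizon N are lists of length N.
  traj f x0 us k is the solution x_u(k,x0).\<close>

primrec traj :: "('x \<Rightarrow> 'u \<Rightarrow> 'x) \<Rightarrow> 'x \<Rightarrow> 'u list \<Rightarrow> nat \<Rightarrow> 'x" where
  "traj f x0 us 0 = x0"
| "traj f x0 us (Suc k) = f (traj f x0 us k) (us ! k)"

definition admissible ::
  "('x \<Rightarrow> 'u \<Rightarrow> 'x) \<Rightarrow> 'x set \<Rightarrow> 'u set \<Rightarrow> 'x set \<Rightarrow> nat \<Rightarrow> 'x \<Rightarrow> 'u list set" where
  "admissible f X U X0 N x0 =
     {us. length us = N \<and> set us \<subseteq> U
        \<and> (\<forall>k\<in>{1..N-1}. traj f x0 us k \<in> X) \<and> traj f x0 us N \<in> X0}"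

definition feasible_set ::
  "('x \<Rightarrow> 'u \<Rightarrow> 'x) \<Rightarrow> 'x set \<Rightarrow> 'u set \<Rightarrow> 'x set \<Rightarrow> nat \<Rightarrow> 'x set" where
  "feasible_set f X U X0 N = {x0 \<in> X. admissible f X U X0 N x0 \<noteq> {}}"

text \<open>Objective J_i^N; objectives indexed by i \<in> {1..s}, the first one carries the
  terminal cost F1.\<close>
definition Jcost ::
  "('x \<Rightarrow> 'u \<Rightarrow> 'x) \<Rightarrow> (nat \<Rightarrow> 'x \<Rightarrow> 'u \<Rightarrow> real) \<Rightarrow> ('x \<Rightarrow> real) \<Rightarrow> nat
     \<Rightarrow> nat \<Rightarrow> 'x \<Rightarrow> 'u list \<Rightarrow> real" where
  "Jcost f l F1 N i x0 us =
     (\<Sum>k<N. l i (traj f x0 us k) (us ! k)) + (if i = 1 then F1 (traj f x0 us N) else 0)"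

definition efficient_set ::
  "('x \<Rightarrow> 'u \<Rightarrow> 'x) \<Rightarrow> 'x set \<Rightarrow> 'u set \<Rightarrow> 'x set \<Rightarrow> (nat \<Rightarrow> 'x \<Rightarrow> 'u \<Rightarrow> real)
     \<Rightarrow> ('x \<Rightarrow> real) \<Rightarrow> nat \<Rightarrow> nat \<Rightarrow> 'x \<Rightarrow> 'u list set" where
  "efficient_set f X U X0 l F1 s N x0 =
     {us \<in> admissible f X U X0 N x0.
        \<not> (\<exists>v \<in> admissible f X U X0 N x0.
              (\<forall>i\<in>{1..s}. Jcost f l F1 N i x0 v \<le> Jcost f l F1 N i x0 us)
            \<and> (\<exists>i\<in>{1..s}. Jcost f l F1 N i x0 v < Jcost f l F1 N i x0 us))}"

text \<open>Objective-value vectors (as functions of the index i; only i \<in> {1..s} matters).\<close>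
definition cost_vectors ::
  "('x \<Rightarrow> 'u \<Rightarrow> 'x) \<Rightarrow> (nat \<Rightarrow> 'x \<Rightarrow> 'u \<Rightarrow> real) \<Rightarrow> ('x \<Rightarrow> real) \<Rightarrow> nat
     \<Rightarrow> 'x \<Rightarrow> 'u list set \<Rightarrow> (nat \<Rightarrow> real) set" where
  "cost_vectors f l F1 N x0 A = (\<lambda>us. \<lambda>i. Jcost f l F1 N i x0 us) ` A"

definition externally_stable ::
  "('x \<Rightarrow> 'u \<Rightarrow> 'x) \<Rightarrow> 'x set \<Rightarrow> 'u set \<Rightarrow> 'x set \<Rightarrow> (nat \<Rightarrow> 'x \<Rightarrow> 'u \<Rightarrow> real)
     \<Rightarrow> ('x \<Rightarrow> real) \<Rightarrow> nat \<Rightarrow> nat \<Rightarrow> 'x \<Rightarrow> bool" where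
  "externally_stable f X U X0 l F1 s N x0 =
     (\<forall>y \<in> cost_vectors f l F1 N x0 (admissible f X U X0 N x0).
        \<exists>yP \<in> cost_vectors f l F1 N x0 (efficient_set f X U X0 l F1 s N x0).
          \<forall>i\<in>{1..s}. yP i \<le> y i)"

definition K_inf :: "(real \<Rightarrow> real) \<Rightarrow> bool" where
  "K_inf \<alpha> = (continuous_on {0..} \<alpha> \<and> strict_mono_on {0..} \<alpha> \<and> \<alpha> 0 = 0
               \<and> (\<forall>x\<ge>0. \<alpha> x \<ge> 0) \<and> (\<forall>M. \<exists>r\<ge>0. \<alpha> r > M))"

definition shifted_seq ::
  "('x \<Rightarrow> 'u \<Rightarrow> 'x) \<Rightarrow> ('x \<Rightarrow> 'u) \<Rightarrow> nat \<Rightarrow> 'x \<Rightarrow> 'u list \<Rightarrow> 'u list" where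
  "shifted_seq f \<kappa> N x us = tl us @ [\<kappa> (traj f x us N)]"

definition rotated_cost ::
  "('x \<Rightarrow> 'u \<Rightarrow> 'x) \<Rightarrow> ('x \<Rightarrow> 'u \<Rightarrow> real) \<Rightarrow> ('x \<Rightarrow> real) \<Rightarrow> 'x \<Rightarrow> 'u \<Rightarrow> 'x \<Rightarrow> 'u \<Rightarrow> real" where
  "rotated_cost f l1 lam1 xe ue x u = l1 x u - l1 xe ue + lam1 x - lam1 (f x u)"

end

theory Submission
  imports Defs
begin

text \<open>The Lyapunov function is V k = J_1(x k, u*_k) + lam1 (x k). Rotating the stage cost turns
  J_1 + lam1 into a sum of rotated costs plus terms bounded below, so V is bounded below.
  The shifted candidate sequence, the terminal cost inequality of Assumption A (iv) and the
  selection rule of Algorithm 1 give V (k+1) \<le> V k - r k, where r k is the rotated cost of the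
  applied input. Hence the nonnegative r k are summable and tend to 0, and the K_infinity
  lower bound r k \<ge> alpha |x k - xe| forces x k \<rightarrow> xe.\<close>

lemma K_inf_nonneg: "K_inf \<alpha> \<Longrightarrow> 0 \<le> a \<Longrightarrow> 0 \<le> \<alpha> a"
  unfolding K_inf_def by blast

lemma K_inf_pos: "K_inf \<alpha> \<Longrightarrow> 0 < a \<Longrightarrow> 0 < \<alpha> a"
  unfolding K_inf_def using strict_mono_onD[of "{0..}" \<alpha> 0 a] by simp

lemma K_inf_mono: "K_inf \<alpha> \<Longrightarrow> 0 \<le> a \<Longrightarrow> a \<le> b \<Longrightarrow> \<alpha> a \<le> \<alpha> b"
  unfolding K_inf_def using strict_mono_on_leD[of "{0..}" \<alpha> a b] by simp

lemma K_inf_bound_imp_LIMSEQ: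
  fixes x :: "nat \<Rightarrow> 'a::real_normed_vector"
  assumes \<alpha>: "K_inf \<alpha>" and bound: "\<And>k. \<alpha> (norm (x k - a)) \<le> r k" and r: "r \<longlonglongrightarrow> 0"
  shows "x \<longlonglongrightarrow> a"
proof (rule LIMSEQ_I)
  fix e :: real
  assume "0 < e"
  then obtain K where K: "\<forall>k\<ge>K. norm (r k - 0) < \<alpha> e"
    using r LIMSEQ_D K_inf_pos[OF \<alpha>] by blast
  have "norm (x k - a) < e" if "K \<le> k" for k
  proof (rule ccontr)
    assume "\<not> norm (x k - a) < e"
    then have "\<alpha> e \<le> \<alpha> (norm (x k - a))"
      using \<open>0 < e\<close> by (intro K_inf_mono[OF \<alpha>]) auto
    with bound[of k] K that show False by auto
  qed
  then show "\<exists>K. \<forall>k\<ge>K. norm (x k - a) < e" by blast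
qed

lemma decrease_bounded_below_imp_LIMSEQ_zero:
  fixes V r :: "nat \<Rightarrow> real"
  assumes r_nonneg: "\<And>k. 0 \<le> r k" and decrease: "\<And>k. V (Suc k) \<le> V k - r k"
    and bounded: "\<And>k. b \<le> V k"
  shows "r \<longlonglongrightarrow> 0"
proof -
  have partial_sums: "(\<Sum>k<K. r k) \<le> V 0 - V K" for K
  proof (induction K)
    case (Suc K)
    then show ?case using decrease[of K] by simp
  qed simp
  have "(\<Sum>k<K. r k) \<le> V 0 - b" for K
    using partial_sums[of K] bounded[of K] by linarith
  then have "summable r"
    by (intro summableI_nonneg_bounded) (use r_nonneg in auto)
  then show ?thesis by (rule summable_LIMSEQ_zero)
qed

lemma admissible_nth_in_U:
  "us \<in> admissible f X U X0 N x0 \<Longrightarrow> j < N \<Longrightarrow> us ! j \<in> U"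
  unfolding admissible_def by (auto dest: nth_mem)

lemma admissible_traj_in_X:
  "us \<in> admissible f X U X0 N x0 \<Longrightarrow> x0 \<in> X \<Longrightarrow> j < N \<Longrightarrow> traj f x0 us j \<in> X"
  unfolding admissible_def by (cases j) (auto simp del: traj.simps(2))

lemma closed_loop_in_X:
  assumes "x 0 \<in> X" and "2 \<le> N"
    and adm: "\<And>k. us k \<in> admissible f X U X0 N (x k)"
    and step: "\<And>k. x (Suc k) = f (x k) (us k ! 0)"
  shows "x k \<in> X"
proof (cases k)
  case (Suc j)
  have "traj f (x j) (us j) 1 \<in> X"
    using adm[of j] \<open>2 \<le> N\<close> unfolding admissible_def by (auto simp del: traj.simps(2))
  then show ?thesis using Suc step by simp
qed (use \<open>x 0 \<in> X\<close> in simp)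

lemma traj_tl_append:
  assumes "j < length us"
  shows "traj f (f x0 (us ! 0)) (tl us @ w) j = traj f x0 us (Suc j)"
  using assms
proof (induction j)
  case (Suc j)
  then have "j < length (tl us)" by simp
  then have "(tl us @ w) ! j = us ! Suc j" by (simp add: nth_append nth_tl)
  with Suc show ?case by simp
qed simp

lemma sum_rotated_cost:
  "(\<Sum>k<N. l1 (traj f x0 us k) (us ! k))
    = (\<Sum>k<N. rotated_cost f l1 lam1 xe ue (traj f x0 us k) (us ! k))
      + real N * l1 xe ue - lam1 x0 + lam1 (traj f x0 us N)"
proof -
  have "(\<Sum>k<N. rotated_cost f l1 lam1 xe ue (traj f x0 us k) (us ! k))
     = (\<Sum>k<N. l1 (traj f x0 us k) (us ! k)) - (\<Sum>k<N. l1 xe ue)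
       - (\<Sum>k<N. lam1 (traj f x0 us (Suc k)) - lam1 (traj f x0 us k))"
    unfolding rotated_cost_def sum_subtractf[symmetric] by (intro sum.cong) auto
  moreover have "(\<Sum>k<N. lam1 (traj f x0 us (Suc k)) - lam1 (traj f x0 us k))
      = lam1 (traj f x0 us N) - lam1 x0"
    by (subst sum_lessThan_telescope) simp
  ultimately show ?thesis by simp
qed

lemma Jcost_plus_storage_lower_bound:
  assumes adm: "us \<in> admissible f X U X0 N x0" and "x0 \<in> X" and "X0 \<subseteq> X"
    and rot_nonneg: "\<forall>z\<in>X. \<forall>v\<in>U. 0 \<le> rotated_cost f (l 1) lam1 xe ue z v"
    and lam1_bound: "\<forall>z\<in>X. c \<le> lam1 z" and F1_nonneg: "\<forall>z\<in>X0. 0 \<le> F1 z"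
  shows "real N * l 1 xe ue + c \<le> Jcost f l F1 N 1 x0 us + lam1 x0"
proof -
  let ?T = "traj f x0 us"
  have "0 \<le> (\<Sum>j<N. rotated_cost f (l 1) lam1 xe ue (?T j) (us ! j))"
    using rot_nonneg admissible_traj_in_X[OF adm \<open>x0 \<in> X\<close>] admissible_nth_in_U[OF adm]
    by (intro sum_nonneg) auto
  moreover have "?T N \<in> X0" using adm unfolding admissible_def by blast
  moreover have "Jcost f l F1 N 1 x0 us + lam1 x0
      = (\<Sum>j<N. rotated_cost f (l 1) lam1 xe ue (?T j) (us ! j))
        + real N * l 1 xe ue + lam1 (?T N) + F1 (?T N)"
    unfolding Jcost_def using sum_rotated_cost[of "l 1" f x0 us N lam1 xe ue] by simp
  ultimately show ?thesis using lam1_bound F1_nonneg \<open>X0 \<subseteq> X\<close> by force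
qed

lemma Jcost_shifted_seq_le:
  assumes len: "length us = N" and "1 \<le> N"
    and terminal: "\<forall>z\<in>X0. F1 (f z (\<kappa> z)) + l 1 z (\<kappa> z) \<le> F1 z + c"
    and end_in_X0: "traj f x0 us N \<in> X0"
  shows "Jcost f l F1 N 1 (f x0 (us ! 0)) (shifted_seq f \<kappa> N x0 us)
         \<le> Jcost f l F1 N 1 x0 us - l 1 x0 (us ! 0) + c"
proof -
  obtain M where M: "N = Suc M" using \<open>1 \<le> N\<close> by (cases N) auto
  define z where "z = traj f x0 us N"
  let ?sh = "tl us @ [\<kappa> z]"
  have traj_sh: "traj f (f x0 (us ! 0)) ?sh j = traj f x0 us (Suc j)" if "j < N" for j
    using that len by (intro traj_tl_append) simp
  have sh_nth: "?sh ! j = us ! Suc j" if "j < M" for j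
    using that len M by (simp add: nth_append nth_tl)
  have sh_last: "?sh ! M = \<kappa> z" using len M by (simp add: nth_append)
  have traj_sh_M: "traj f (f x0 (us ! 0)) ?sh M = z"
    using traj_sh[of M] M by (simp add: z_def)
  let ?tail = "\<Sum>k<M. l 1 (traj f x0 us (Suc k)) (us ! Suc k)"
  have "Jcost f l F1 N 1 (f x0 (us ! 0)) ?sh = ?tail + l 1 z (\<kappa> z) + F1 (f z (\<kappa> z))"
    unfolding Jcost_def using traj_sh sh_nth traj_sh_M sh_last by (simp add: M)
  moreover have "Jcost f l F1 N 1 x0 us = l 1 x0 (us ! 0) + ?tail + F1 z"
    unfolding Jcost_def z_def M by (subst sum.lessThan_Suc_shift) simp
  moreover have "F1 (f z (\<kappa> z)) + l 1 z (\<kappa> z) \<le> F1 z + c"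
    using terminal end_in_X0 unfolding z_def by blast
  moreover have "shifted_seq f \<kappa> N x0 us = ?sh" unfolding shifted_seq_def z_def ..
  ultimately show ?thesis by simp
qed

lemma Jcost_plus_storage_decrease:
  assumes adm: "us \<in> admissible f X U X0 N x0" and "1 \<le> N"
    and terminal: "\<forall>z\<in>X0. F1 (f z (\<kappa> z)) + l 1 z (\<kappa> z) \<le> F1 z + l 1 xe ue"
    and select: "Jcost f l F1 N 1 (f x0 (us ! 0)) us'
      \<le> Jcost f l F1 N 1 (f x0 (us ! 0)) (shifted_seq f \<kappa> N x0 us)"
  shows "Jcost f l F1 N 1 (f x0 (us ! 0)) us' + lam1 (f x0 (us ! 0))
    \<le> Jcost f l F1 N 1 x0 us + lam1 x0 - rotated_cost f (l 1) lam1 xe ue x0 (us ! 0)"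
proof -
  have "length us = N" "traj f x0 us N \<in> X0"
    using adm unfolding admissible_def by blast+
  then have "Jcost f l F1 N 1 (f x0 (us ! 0)) (shifted_seq f \<kappa> N x0 us)
      \<le> Jcost f l F1 N 1 x0 us - l 1 x0 (us ! 0) + l 1 xe ue"
    using \<open>1 \<le> N\<close> terminal by (intro Jcost_shifted_seq_le[where l = l])
  with select show ?thesis unfolding rotated_cost_def by simp
qed

theorem corollary4p3:
  fixes f :: "real ^ 'n \<Rightarrow> real ^ 'm \<Rightarrow> real ^ 'n"
    and X X0 :: "(real ^ 'n) set" and U :: "(real ^ 'm) set"
    and N s :: nat
    and l :: "nat \<Rightarrow> real ^ 'n \<Rightarrow> real ^ 'm \<Rightarrow> real"
    and F1 :: "real ^ 'n \<Rightarrow> real"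
    and xe :: "real ^ 'n" and ue :: "real ^ 'm"
    and lam1 :: "real ^ 'n \<Rightarrow> real" and \<alpha> :: "real \<Rightarrow> real"
    and \<kappa> :: "real ^ 'n \<Rightarrow> real ^ 'm"
    and x0 :: "real ^ 'n"
    and x :: "nat \<Rightarrow> real ^ 'n" and ustar :: "nat \<Rightarrow> (real ^ 'm) list"
  assumes f_cont: "continuous_on UNIV (\<lambda>(z, v). f z v)"
    and X_ne: "X \<noteq> {}" and U_ne: "U \<noteq> {}" and X0_ne: "X0 \<noteq> {}" and X0_sub: "X0 \<subseteq> X"
    and N_ge: "N \<ge> 2" and s_ge: "s \<ge> 2"
    and F1_cont: "continuous_on X0 F1" and F1_nonneg: "\<forall>z\<in>X0. F1 z \<ge> 0"
    \<comment> \<open>Assumption A (i)\<close>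
    and A1: "xe \<in> X" "ue \<in> U" "f xe ue = xe"
    \<comment> \<open>Assumption A (ii)\<close>
    and A2_bdd: "\<exists>c. \<forall>z\<in>X. c \<le> lam1 z" and A2_zero: "lam1 xe = 0"
    and A2_K: "K_inf \<alpha>"
    and A2_diss: "\<forall>z\<in>X. \<forall>v\<in>U.
        l 1 z v - l 1 xe ue + lam1 z - lam1 (f z v) \<ge> \<alpha> (norm (z - xe) + norm (v - ue))"
    \<comment> \<open>Assumption A (iii)\<close>
    and A3: "\<forall>i\<in>{1..s}. continuous_on (X \<times> U) (\<lambda>(z, v). l i z v)"
    \<comment> \<open>Assumption A (iv)\<close>
    and A4_xe: "xe \<in> X0"
    and A4: "\<forall>z\<in>X0. \<kappa> z \<in> U \<and> f z (\<kappa> z) \<in> X0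
               \<and> F1 (f z (\<kappa> z)) + l 1 z (\<kappa> z) \<le> F1 z + l 1 xe ue"
    \<comment> \<open>Assumption A (v)\<close>
    and A5: "\<forall>z\<in>feasible_set f X U X0 N. externally_stable f X U X0 l F1 s N z"
    \<comment> \<open>initial state\<close>
    and x0_feas: "x0 \<in> feasible_set f X U X0 N"
    \<comment> \<open>Algorithm 1\<close>
    and alg_init: "x 0 = x0"
    and alg_eff: "\<forall>k. ustar k \<in> efficient_set f X U X0 l F1 s N (x k)"
    and alg_sel: "\<forall>k\<ge>1. Jcost f l F1 N 1 (x k) (ustar k)
                        \<le> Jcost f l F1 N 1 (x k) (shifted_seq f \<kappa> N (x (k - 1)) (ustar (k - 1)))"
    and alg_step: "\<forall>k. x (Suc k) = f (x k) (ustar k ! 0)"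
  shows "x \<longlonglongrightarrow> xe
    \<and> (\<lambda>k. rotated_cost f (l 1) lam1 xe ue (x k) (ustar k ! 0)) \<longlonglongrightarrow> 0"
proof -
  \<comment> \<open>Only A (ii), A (iv) and the selection rule enter. The other hypotheses (continuity,
    the equilibrium, external stability) make Algorithm 1 well defined, which the given
    sequence ustar already presupposes.\<close>
  obtain c where c: "\<forall>z\<in>X. c \<le> lam1 z" using A2_bdd by blast
  have adm: "ustar k \<in> admissible f X U X0 N (x k)" for k
    using alg_eff unfolding efficient_set_def by blast
  have x_in_X: "x k \<in> X" for k
  proof (rule closed_loop_in_X[of x X N ustar f U X0])
    show "x 0 \<in> X" using x0_feas alg_init unfolding feasible_set_def by simp
  qed (use N_ge adm alg_step in auto)
  have u_in_U: "ustar k ! 0 \<in> U" for k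
    using admissible_nth_in_U[OF adm] N_ge by simp
  have rot_ge: "\<forall>z\<in>X. \<forall>v\<in>U.
      \<alpha> (norm (z - xe) + norm (v - ue)) \<le> rotated_cost f (l 1) lam1 xe ue z v"
    using A2_diss unfolding rotated_cost_def by blast
  then have rot_nonneg: "\<forall>z\<in>X. \<forall>v\<in>U. 0 \<le> rotated_cost f (l 1) lam1 xe ue z v"
    using K_inf_nonneg[OF A2_K] by (meson add_nonneg_nonneg norm_ge_zero order_trans)
  define r where "r k = rotated_cost f (l 1) lam1 xe ue (x k) (ustar k ! 0)" for k
  define V where "V k = Jcost f l F1 N 1 (x k) (ustar k) + lam1 (x k)" for k
  have r_nonneg: "0 \<le> r k" for k
    unfolding r_def using rot_nonneg x_in_X u_in_U by blast
  have V_decrease: "V (Suc k) \<le> V k - r k" for k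
  proof -
    have "\<forall>z\<in>X0. F1 (f z (\<kappa> z)) + l 1 z (\<kappa> z) \<le> F1 z + l 1 xe ue"
      using A4 by blast
    moreover have "Jcost f l F1 N 1 (f (x k) (ustar k ! 0)) (ustar (Suc k))
        \<le> Jcost f l F1 N 1 (f (x k) (ustar k ! 0)) (shifted_seq f \<kappa> N (x k) (ustar k))"
      using alg_sel alg_step by (metis diff_Suc_1 le_add1 plus_1_eq_Suc)
    ultimately show ?thesis
      using Jcost_plus_storage_decrease[where l = l, OF adm[of k]] N_ge alg_step
      unfolding V_def r_def by simp
  qed
  have V_bounded: "real N * l 1 xe ue + c \<le> V k" for k
    unfolding V_def
    by (rule Jcost_plus_storage_lower_bound[where l = l, OF adm x_in_X X0_sub rot_nonneg c F1_nonneg])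
  have r_tendsto: "r \<longlonglongrightarrow> 0"
    using r_nonneg V_decrease V_bounded by (rule decrease_bounded_below_imp_LIMSEQ_zero)
  have "\<alpha> (norm (x k - xe)) \<le> r k" for k
  proof -
    have "\<alpha> (norm (x k - xe)) \<le> \<alpha> (norm (x k - xe) + norm (ustar k ! 0 - ue))"
      by (rule K_inf_mono[OF A2_K]) auto
    also have "\<dots> \<le> r k" unfolding r_def using rot_ge x_in_X u_in_U by blast
    finally show ?thesis .
  qed
  then have "x \<longlonglongrightarrow> xe" using r_tendsto by (rule K_inf_bound_imp_LIMSEQ[OF A2_K])
  then show ?thesis using r_tendsto unfolding r_def ..
qed

end
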